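(* Let $\mathbf V$ be a monoid variety and let $\mathcal F$ be a logic corresponding to $\mathbf V$. Let $f$ be a partial function $\Sigma^\ast\to\Sigma^\ast$ definable by a complete $\mathbf V$-bimachine. Then $f$ is definable by an $\mathcal F$-translation.
   Context: Bimachines: a bimachine is a tuple $B=(L,R,\omega,\lambda,\rho)$ where $L$ is a deterministic left automaton over $\Sigma$ with initial state $l_0$, $R$ is a deterministic right automaton (reading right to left) with initial state $r_0$, $\omega:L\times\Sigma\times R\to\Sigma^\ast$ is a partial output function and $\rho:L\to\Sigma^\ast$, $\lambda:R\to\Sigma^\ast$ are partial. For $u=\sigma_1\cdots\sigma_n$ with runs $l_0\xrightarrow{\sigma_1}l_1\cdots\xrightarrow{\sigma_n}l_n$ of $L$ and $r_n\xleftarrow{\sigma_1}r_{n-1}\cdots r_1\xleftarrow{\sigma_n}r_0$ of $R$, $[\![B]\!](u)=\lambda(r_n)\,\omega(l_0,\sigma_1,r_{n-1})\cdots\omega(l_{i-1},\sigma_i,r_{n-i})\cdots\omega(l_{n-1},\sigma_n,r_0)\,\rho(l_n)$ when all these are defined. $B$ is complete if $\omega$ is total. The transition congruence of an automaton $A$ with state set $Q$ is $u\equiv_A v$ iff for all $p,q\in Q$, ($A$ has a run from $p$ to $q$ on $u$) $\Leftrightarrow$ (it has one on $v$); the transition monoid is $\Sigma^\ast/\equiv_A$; $A$ is a $\mathbf V$-automaton if its transition monoid is in $\mathbf V$. $B$ is a $\mathbf V$-bimachine if $L$ and $R$ are $\mathbf V$-automata. A language is a $\mathbf V$-language if it is recognized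 by some $\mathbf V$-automaton. Logics: $\mathcal F$ is a fragment of monadic second-order logic over words (signature $<$ and unary letter predicates); a language is an $\mathcal F$-language if it is the set of words satisfying some closed $\mathcal F$-formula; $\mathcal F$ corresponds to $\mathbf V$ if the $\mathcal F$-languages are exactly the $\mathbf V$-languages. Translations: an $\mathcal F$-translation is a tuple $\mathcal T=(k,S,(\varphi^<_{j,\sigma,v},\varphi^>_{j,\sigma,v})_{1\le j\le k,\sigma\in\Sigma,v\in S},(\varphi^i_v)_{v\in S},(\varphi^t_v)_{v\in S})$ with $k>0$, $S\subset\Sigma^\ast$ finite, and all $\varphi$ closed $\mathcal F$-formulas. $(u,w)\in[\![\mathcal T]\!]$ iff for $u=\sigma_1\cdots\sigma_n$ there is a decomposition $w=w_0w_1\cdots w_nw_{n+1}$ with all $w_i\in S$ such that for each $1\le i\le n$ there is $j\le k$ with $\sigma_1\cdots\sigma_{i-1}\models\varphi^<_{j,\sigma_i,w_i}$ and $\sigma_{i+1}\cdots\sigma_n\models\varphi^>_{j,\sigma_i,w_i}$, and $u\models\varphi^i_{w_0}$, $u\models\varphi^t_{w_{n+1}}$. It is required to be exhaustive: for all $\sigma\in\Sigma$, $u,w\in\Sigma^\ast$ there are $j\le k$, $v\in S$ with $u\models\varphi^<_{j,\sigma,v}$ and $w\models\varphi^>_{j,\sigma,v}$; and functional: for $v_1\ne v_2$ in $S$ and any $j,j',\sigma$, either $\varphi^<_{j,\sigma,v_1}\wedge\varphi^<_{j',\sigma,v_2}$ or $\varphi^>_{j,\sigma,v_1}\wedge\varphi^>_{j',\sigma,v_2}$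 is unsatisfiable, and $\varphi^i_{v_1}\wedge\varphi^i_{v_2}$, $\varphi^t_{v_1}\wedge\varphi^t_{v_2}$ are unsatisfiable. A function is definable by $\mathcal T$ if it equals $[\![\mathcal T]\!]$. *)

theory Defs
  imports "HOL-Algebra.Group"
begin

definition mon_hom :: "'a monoid \<Rightarrow> 'b monoid \<Rightarrow> ('a \<Rightarrow> 'b) set" where
  "mon_hom M N = {h. h \<in> carrier M \<rightarrow> carrier N \<and>
     (\<forall>x\<in>carrier M. \<forall>y\<in>carrier M. h (x \<otimes>\<^bsub>M\<^esub> y) = h x \<otimes>\<^bsub>N\<^esub> h y) \<and>
     h \<one>\<^bsub>M\<^esub> = \<one>\<^bsub>N\<^esub>}"

definition mon_iso :: "'a monoid \<Rightarrow> 'b monoid \<Rightarrow> bool" where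
  "mon_iso M N \<longleftrightarrow> (\<exists>h\<in>mon_hom M N. bij_betw h (carrier M) (carrier N))"

definition fin_monoid :: "'a monoid \<Rightarrow> bool" where
  "fin_monoid M \<longleftrightarrow> monoid M \<and> finite (carrier M)"

definition prodM :: "'a monoid \<Rightarrow> 'b monoid \<Rightarrow> ('a \<times> 'b) monoid" where
  "prodM M N = \<lparr>carrier = carrier M \<times> carrier N,
     mult = (\<lambda>(x1,y1) (x2,y2). (x1 \<otimes>\<^bsub>M\<^esub> x2, y1 \<otimes>\<^bsub>N\<^esub> y2)),
     one = (\<one>\<^bsub>M\<^esub>, \<one>\<^bsub>N\<^esub>)\<rparr>"

text \<open>A monoid variety (pseudovariety): a class of finite monoids closed under
  submonoids, quotients (surjective images, hence isomorphic copies) and finite direct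
  products (including the empty product, the trivial monoid).  Since every finite
  monoid is isomorphic to one carried by a subset of nat, the class is represented by
  its members carried by nat.\<close>

definition monoid_variety :: "nat monoid set \<Rightarrow> bool" where
  "monoid_variety V \<longleftrightarrow>
     (\<forall>M\<in>V. fin_monoid M) \<and>
     (\<exists>M\<in>V. card (carrier M) = 1) \<and>
     (\<forall>M\<in>V. \<forall>S. S \<subseteq> carrier M \<and> \<one>\<^bsub>M\<^esub> \<in> S \<and> (\<forall>x\<in>S. \<forall>y\<in>S. x \<otimes>\<^bsub>M\<^esub> y \<in> S)
                \<longrightarrow> M\<lparr>carrier := S\<rparr> \<in> V) \<and>
     (\<forall>M\<in>V. \<forall>N :: nat monoid. monoid N \<and> (\<exists>h\<in>mon_hom M N. h ` carrier M = carrier N)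
                \<longrightarrow> N \<in> V) \<and>
     (\<forall>M\<in>V. \<forall>N\<in>V. \<exists>P\<in>V. mon_iso P (prodM M N))"

definition in_var :: "nat monoid set \<Rightarrow> 'b monoid \<Rightarrow> bool" where
  "in_var V M \<longleftrightarrow> (\<exists>N\<in>V. mon_iso M N)"

record ('q, 'a) dfa =
  states :: "'q set"
  init :: 'q
  trans :: "'q \<Rightarrow> 'a \<Rightarrow> 'q option"
  final :: "'q set"

definition wf_dfa :: "('q, 'a) dfa \<Rightarrow> bool" where
  "wf_dfa A \<longleftrightarrow> finite (states A) \<and> init A \<in> states A \<and> final A \<subseteq> states A \<and>
     (\<forall>q\<in>states A. \<forall>a p. trans A q a = Some p \<longrightarrow> p \<in> states A)"

fun steps :: "('q, 'a) dfa \<Rightarrow> 'q \<Rightarrow> 'a list \<Rightarrow> 'q option" where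
  "steps A q [] = Some q"
| "steps A q (a # w) = (case trans A q a of None \<Rightarrow> None | Some p \<Rightarrow> steps A p w)"

definition run_rel :: "('q, 'a) dfa \<Rightarrow> 'a list \<Rightarrow> ('q \<times> 'q) set" where
  "run_rel A w = {(p, q). p \<in> states A \<and> q \<in> states A \<and> steps A p w = Some q}"

definition dfa_lang :: "('q, 'a) dfa \<Rightarrow> 'a list set" where
  "dfa_lang A = {w. \<exists>q. steps A (init A) w = Some q \<and> q \<in> final A}"

definition quot_monoid :: "('a list \<Rightarrow> 'a list \<Rightarrow> bool) \<Rightarrow> 'a list set monoid" where
  "quot_monoid E = \<lparr>carrier = {{v. E v w} | w. True},
     mult = (\<lambda>X Y. {v. \<exists>x\<in>X. \<exists>y\<in>Y. E v (x @ y)}),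
     one = {v. E v []}\<rparr>"

text \<open>Transition congruence of a left automaton (reading left to right) and of a right
  automaton (reading right to left).\<close>
definition tcong_left :: "('q, 'a) dfa \<Rightarrow> 'a list \<Rightarrow> 'a list \<Rightarrow> bool" where
  "tcong_left A u v \<longleftrightarrow> run_rel A u = run_rel A v"

definition tcong_right :: "('q, 'a) dfa \<Rightarrow> 'a list \<Rightarrow> 'a list \<Rightarrow> bool" where
  "tcong_right A u v \<longleftrightarrow> run_rel A (rev u) = run_rel A (rev v)"

definition V_left_automaton :: "nat monoid set \<Rightarrow> ('q, 'a) dfa \<Rightarrow> bool" where
  "V_left_automaton V A \<longleftrightarrow> in_var V (quot_monoid (tcong_left A))"

definition V_right_automaton :: "nat monoid set \<Rightarrow> ('q, 'a) dfa \<Rightarrow> bool" where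
  "V_right_automaton V A \<longleftrightarrow> in_var V (quot_monoid (tcong_right A))"

text \<open>V-languages: recognised by some V-automaton (states may be taken in nat w.l.o.g.).\<close>
definition V_language :: "nat monoid set \<Rightarrow> 'a list set \<Rightarrow> bool" where
  "V_language V L \<longleftrightarrow> (\<exists>A :: (nat, 'a) dfa. wf_dfa A \<and> V_left_automaton V A \<and> dfa_lang A = L)"

record ('l, 'r, 'a) bimachine =
  bL :: "('l, 'a) dfa"
  bR :: "('r, 'a) dfa"
  bout :: "'l \<Rightarrow> 'a \<Rightarrow> 'r \<Rightarrow> 'a list option"
  blam :: "'r \<Rightarrow> 'a list option"
  brho :: "'l \<Rightarrow> 'a list option"

definition wf_bimachine :: "('l, 'r, 'a) bimachine \<Rightarrow> bool" where
  "wf_bimachine B \<longleftrightarrow> wf_dfa (bL B) \<and> wf_dfa (bR B)"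

definition complete_bimachine :: "('l, 'r, 'a) bimachine \<Rightarrow> bool" where
  "complete_bimachine B \<longleftrightarrow>
     (\<forall>l\<in>states (bL B). \<forall>a. \<forall>r\<in>states (bR B). bout B l a r \<noteq> None)"

definition V_bimachine :: "nat monoid set \<Rightarrow> ('l, 'r, 'a) bimachine \<Rightarrow> bool" where
  "V_bimachine V B \<longleftrightarrow> V_left_automaton V (bL B) \<and> V_right_automaton V (bR B)"

text \<open>l_i = state of L after sigma_1..sigma_i; r_j = state of R after reading the last j
  letters from right to left.\<close>
definition lst :: "('l, 'r, 'a) bimachine \<Rightarrow> 'a list \<Rightarrow> nat \<Rightarrow> 'l option" where
  "lst B u i = steps (bL B) (init (bL B)) (take i u)"

definition rst :: "('l, 'r, 'a) bimachine \<Rightarrow> 'a list \<Rightarrow> nat \<Rightarrow> 'r option" where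
  "rst B u j = steps (bR B) (init (bR B)) (rev (drop (length u - j) u))"

definition bm_sem :: "('l, 'r, 'a) bimachine \<Rightarrow> 'a list \<Rightarrow> 'a list option" where
  "bm_sem B u =
     (let n = length u in
      if (\<forall>i\<le>n. lst B u i \<noteq> None \<and> rst B u i \<noteq> None)
         \<and> blam B (the (rst B u n)) \<noteq> None
         \<and> (\<forall>i\<in>{1..n}. bout B (the (lst B u (i - 1))) (u ! (i - 1)) (the (rst B u (n - i))) \<noteq> None)
         \<and> brho B (the (lst B u n)) \<noteq> None
      then Some (the (blam B (the (rst B u n)))
                 @ concat (map (\<lambda>i. the (bout B (the (lst B u (i - 1))) (u ! (i - 1)) (the (rst B u (n - i))))) [1..<Suc n])
                 @ the (brho B (the (lst B u n))))
      else None)"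

datatype 'a mso =
    Less nat nat
  | Lab 'a nat
  | Mem nat nat           \<comment> \<open>x \<in> X (first-order x, second-order X)\<close>
  | Neg "'a mso"
  | Conj "'a mso" "'a mso"
  | ExF nat "'a mso"
  | ExS nat "'a mso"

fun fvF :: "'a mso \<Rightarrow> nat set" where
  "fvF (Less x y) = {x, y}"
| "fvF (Lab a x) = {x}"
| "fvF (Mem x X) = {x}"
| "fvF (Neg \<phi>) = fvF \<phi>"
| "fvF (Conj \<phi> \<psi>) = fvF \<phi> \<union> fvF \<psi>"
| "fvF (ExF x \<phi>) = fvF \<phi> - {x}"
| "fvF (ExS X \<phi>) = fvF \<phi>"

fun fvS :: "'a mso \<Rightarrow> nat set" where
  "fvS (Less x y) = {}"
| "fvS (Lab a x) = {}"
| "fvS (Mem x X) = {X}"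
| "fvS (Neg \<phi>) = fvS \<phi>"
| "fvS (Conj \<phi> \<psi>) = fvS \<phi> \<union> fvS \<psi>"
| "fvS (ExF x \<phi>) = fvS \<phi>"
| "fvS (ExS X \<phi>) = fvS \<phi> - {X}"

definition closed_mso :: "'a mso \<Rightarrow> bool" where
  "closed_mso \<phi> \<longleftrightarrow> fvF \<phi> = {} \<and> fvS \<phi> = {}"

text \<open>Positions of a word are 0..length w - 1.\<close>
fun sat :: "'a list \<Rightarrow> (nat \<Rightarrow> nat) \<Rightarrow> (nat \<Rightarrow> nat set) \<Rightarrow> 'a mso \<Rightarrow> bool" where
  "sat w I J (Less x y) = (I x < I y)"
| "sat w I J (Lab a x) = (I x < length w \<and> w ! (I x) = a)"
| "sat w I J (Mem x X) = (I x \<in> J X)"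
| "sat w I J (Neg \<phi>) = (\<not> sat w I J \<phi>)"
| "sat w I J (Conj \<phi> \<psi>) = (sat w I J \<phi> \<and> sat w I J \<psi>)"
| "sat w I J (ExF x \<phi>) = (\<exists>p<length w. sat w (I(x := p)) J \<phi>)"
| "sat w I J (ExS X \<phi>) = (\<exists>S\<subseteq>{..<length w}. sat w I (J(X := S)) \<phi>)"

definition models :: "'a list \<Rightarrow> 'a mso \<Rightarrow> bool" (infix "\<Turnstile>" 50) where
  "w \<Turnstile> \<phi> \<longleftrightarrow> sat w (\<lambda>_. 0) (\<lambda>_. {}) \<phi>"

definition unsat :: "'a mso \<Rightarrow> bool" where
  "unsat \<phi> \<longleftrightarrow> \<not> (\<exists>w. w \<Turnstile> \<phi>)"

text \<open>A logic is a fragment F of MSO (a set of formulas).\<close>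
definition F_language :: "'a mso set \<Rightarrow> 'a list set \<Rightarrow> bool" where
  "F_language F L \<longleftrightarrow> (\<exists>\<phi>\<in>F. closed_mso \<phi> \<and> L = {w. w \<Turnstile> \<phi>})"

definition corresponds :: "'a mso set \<Rightarrow> nat monoid set \<Rightarrow> bool" where
  "corresponds F V \<longleftrightarrow> (\<forall>L. F_language F L \<longleftrightarrow> V_language V L)"

record 'a translation =
  tk :: nat
  tS :: "'a list set"
  tL :: "nat \<Rightarrow> 'a \<Rightarrow> 'a list \<Rightarrow> 'a mso"
  tR :: "nat \<Rightarrow> 'a \<Rightarrow> 'a list \<Rightarrow> 'a mso"
  tI :: "'a list \<Rightarrow> 'a mso"
  tT :: "'a list \<Rightarrow> 'a mso"

definition F_translation :: "'a mso set \<Rightarrow> 'a translation \<Rightarrow> bool" where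
  "F_translation F T \<longleftrightarrow>
     tk T > 0 \<and> finite (tS T) \<and>
     (\<forall>j\<in>{1..tk T}. \<forall>\<sigma>. \<forall>v\<in>tS T.
        tL T j \<sigma> v \<in> F \<and> closed_mso (tL T j \<sigma> v) \<and>
        tR T j \<sigma> v \<in> F \<and> closed_mso (tR T j \<sigma> v)) \<and>
     (\<forall>v\<in>tS T. tI T v \<in> F \<and> closed_mso (tI T v) \<and> tT T v \<in> F \<and> closed_mso (tT T v)) \<and>
     \<comment> \<open>exhaustive\<close>
     (\<forall>\<sigma> u w. \<exists>j\<in>{1..tk T}. \<exists>v\<in>tS T. u \<Turnstile> tL T j \<sigma> v \<and> w \<Turnstile> tR T j \<sigma> v) \<and>
     \<comment> \<open>functional\<close>
     (\<forall>v1\<in>tS T. \<forall>v2\<in>tS T. v1 \<noteq> v2 \<longrightarrow>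
        (\<forall>j\<in>{1..tk T}. \<forall>j'\<in>{1..tk T}. \<forall>\<sigma>.
           unsat (Conj (tL T j \<sigma> v1) (tL T j' \<sigma> v2)) \<or> unsat (Conj (tR T j \<sigma> v1) (tR T j' \<sigma> v2))) \<and>
        unsat (Conj (tI T v1) (tI T v2)) \<and> unsat (Conj (tT T v1) (tT T v2)))"

text \<open>Semantics: ws = [w_0, w_1, ..., w_n, w_{n+1}].\<close>
definition trans_rel :: "'a translation \<Rightarrow> ('a list \<times> 'a list) set" where
  "trans_rel T = {(u, w). \<exists>ws. length ws = length u + 2 \<and> w = concat ws \<and>
     (\<forall>x\<in>set ws. x \<in> tS T) \<and>
     (\<forall>i\<in>{1..length u}. \<exists>j\<in>{1..tk T}.
        take (i - 1) u \<Turnstile> tL T j (u ! (i - 1)) (ws ! i) \<and>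
        drop i u \<Turnstile> tR T j (u ! (i - 1)) (ws ! i)) \<and>
     u \<Turnstile> tI T (ws ! 0) \<and> u \<Turnstile> tT T (ws ! (length u + 1))}"

definition definable_by_translation :: "'a mso set \<Rightarrow> ('a list \<Rightarrow> 'a list option) \<Rightarrow> bool" where
  "definable_by_translation F f \<longleftrightarrow>
     (\<exists>T. F_translation F T \<and> {(u, w). f u = Some w} = trans_rel T)"

end

theory Submission
  imports Defs
begin

text \<open>For a complete bimachine, the output at position i of u depends only on the state
  l of L after the prefix before i, the state r of R after the suffix behind i, and the letter
  at i. So the translation guesses the pair (l, r) (one index j per pair) and checks it with
  one formula on the prefix and one on the suffix. These formulas exist because the languages
  "L reaches l" and "R reaches r" are recognised by automata with the transition monoids of
  L and R: for L after adding a sink state, for R by letting its transition monoid act on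
  itself from the left. Hence they are V-languages, and F-languages since F corresponds to V.
  The output words are finite in number because the alphabet is finite.\<close>

lemma steps_append:
  "steps A q (u @ v) = (case steps A q u of None \<Rightarrow> None | Some p \<Rightarrow> steps A p v)"
  by (induction u arbitrary: q) (auto split: option.splits)

lemma wf_dfa_init: "wf_dfa A \<Longrightarrow> init A \<in> states A"
  by (simp add: wf_dfa_def)

lemma trans_in_states: "wf_dfa A \<Longrightarrow> q \<in> states A \<Longrightarrow> trans A q a = Some p \<Longrightarrow> p \<in> states A"
  by (auto simp: wf_dfa_def)

lemma steps_in_states:
  assumes "wf_dfa A" "q \<in> states A" "steps A q w = Some p"
  shows "p \<in> states A"
  using assms(2,3)
proof (induction w arbitrary: q)
  case (Cons a w)
  then obtain q' where "trans A q a = Some q'" "steps A q' w = Some p"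
    by (auto split: option.splits)
  with Cons trans_in_states[OF assms(1)] show ?case by blast
qed simp

lemma steps_in_option_states:
  assumes "wf_dfa A" "q \<in> states A"
  shows "steps A q w \<in> insert None (Some ` states A)"
  using steps_in_states[OF assms] by (cases "steps A q w") auto

lemma steps_append_defined: "steps A q (u @ v) \<noteq> None \<Longrightarrow> steps A q u \<noteq> None"
  by (simp add: steps_append split: option.splits)

lemma run_rel_iff_steps:
  assumes "wf_dfa A" "q \<in> states A"
  shows "(q, p) \<in> run_rel A w \<longleftrightarrow> steps A q w = Some p"
  using assms steps_in_states[OF assms(1,2)] unfolding run_rel_def by auto

lemma run_rel_Image_singleton:
  assumes "wf_dfa A" "q \<in> states A"
  shows "run_rel A w `` {q} = set_option (steps A q w)"
  using run_rel_iff_steps[OF assms] by (cases "steps A q w") auto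

lemma run_rel_append:
  assumes "wf_dfa A"
  shows "run_rel A (u @ v) = run_rel A u O run_rel A v"
  using steps_in_states[OF assms]
  by (fastforce simp: run_rel_def steps_append split: option.splits)

lemma tcong_left_iff_steps:
  assumes "wf_dfa A"
  shows "tcong_left A u v \<longleftrightarrow> (\<forall>q\<in>states A. steps A q u = steps A q v)"
proof
  assume "tcong_left A u v"
  then have "(q, p) \<in> run_rel A u \<longleftrightarrow> (q, p) \<in> run_rel A v" for q p
    by (simp add: tcong_left_def)
  then show "\<forall>q\<in>states A. steps A q u = steps A q v"
    using run_rel_iff_steps[OF assms] by (metis option.exhaust)
next
  assume "\<forall>q\<in>states A. steps A q u = steps A q v"
  then show "tcong_left A u v" unfolding tcong_left_def run_rel_def by auto
qed

section \<open>Languages of runs are V-languages\<close>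

text \<open>State 0 is a sink standing for an undefined run, and the final states encode P.\<close>

definition totalize :: "('q \<Rightarrow> nat) \<Rightarrow> ('q option \<Rightarrow> bool) \<Rightarrow> ('q, 'a) dfa \<Rightarrow> (nat, 'a) dfa" where
  "totalize e P A =
     \<lparr>states = insert 0 (e ` states A),
      init = e (init A),
      trans = (\<lambda>m a. Some (if m \<in> e ` states A
                            then case_option 0 e (trans A (inv_into (states A) e m) a) else 0)),
      final = case_option 0 e ` {x \<in> insert None (Some ` states A). P x}\<rparr>"

context
  fixes e :: "'q \<Rightarrow> nat" and A :: "('q, 'a) dfa"
  assumes wf: "wf_dfa A" and inj: "inj_on e (states A)" and sink: "0 \<notin> e ` states A"
begin

lemma inj_on_case_option_totalize: "inj_on (case_option 0 e) (insert None (Some ` states A))"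
  using inj sink by (auto simp: inj_on_def)

lemma trans_totalize_sink: "trans (totalize e P A) 0 a = Some 0"
  using sink by (auto simp: totalize_def)

lemma trans_totalize:
  "q \<in> states A \<Longrightarrow> trans (totalize e P A) (e q) a = Some (case_option 0 e (trans A q a))"
  using inj by (auto simp: totalize_def)

lemma steps_totalize_sink: "steps (totalize e P A) 0 w = Some 0"
  by (induction w) (simp_all add: trans_totalize_sink)

lemma steps_totalize:
  "q \<in> states A \<Longrightarrow> steps (totalize e P A) (e q) w = Some (case_option 0 e (steps A q w))"
proof (induction w arbitrary: q)
  case (Cons a w)
  with trans_in_states[OF wf] show ?case
    by (auto simp: trans_totalize steps_totalize_sink split: option.splits)
qed simp

lemma states_totalize: "states (totalize e P A) = insert 0 (e ` states A)"
  by (simp add: totalize_def)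

lemma wf_dfa_totalize: "wf_dfa (totalize e P A)"
  unfolding wf_dfa_def states_totalize
proof (intro conjI ballI allI impI)
  fix m a m' assume "m \<in> insert 0 (e ` states A)" "trans (totalize e P A) m a = Some m'"
  with trans_in_states[OF wf] show "m' \<in> insert 0 (e ` states A)"
    by (auto simp: trans_totalize_sink trans_totalize split: option.splits)
qed (use wf in \<open>auto simp: wf_dfa_def totalize_def\<close>)

lemma final_totalize:
  assumes "x \<in> insert None (Some ` states A)"
  shows "case_option 0 e x \<in> final (totalize e P A) \<longleftrightarrow> P x"
proof -
  have "case_option 0 e x \<in> case_option 0 e ` {x \<in> insert None (Some ` states A). P x} \<longleftrightarrow>
      x \<in> {x \<in> insert None (Some ` states A). P x}"
    using assms by (intro inj_on_image_mem_iff[OF inj_on_case_option_totalize]) auto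
  then show ?thesis using assms by (simp add: totalize_def)
qed

lemma dfa_lang_totalize: "dfa_lang (totalize e P A) = {w. P (steps A (init A) w)}"
  using wf_dfa_init[OF wf] steps_totalize steps_in_option_states[OF wf] final_totalize
  by (auto simp: dfa_lang_def totalize_def)

lemma tcong_left_totalize: "tcong_left (totalize e P A) = tcong_left A"
proof (intro ext)
  fix u v
  have "steps (totalize e P A) (e q) u = steps (totalize e P A) (e q) v \<longleftrightarrow> steps A q u = steps A q v"
    if "q \<in> states A" for q
    using that steps_totalize steps_in_option_states[OF wf] inj_onD[OF inj_on_case_option_totalize]
    by (metis option.inject)
  then show "tcong_left (totalize e P A) u v = tcong_left A u v"
    unfolding tcong_left_iff_steps[OF wf] tcong_left_iff_steps[OF wf_dfa_totalize] states_totalize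
    by (simp add: steps_totalize_sink)
qed

end

lemma V_language_steps:
  fixes A :: "('q, 'a) dfa"
  assumes "wf_dfa A" "V_left_automaton V A"
  shows "V_language V {w. P (steps A (init A) w)}"
proof -
  obtain g :: "'q \<Rightarrow> nat" where "inj_on g (states A)"
    using finite_imp_inj_to_nat_seg assms(1) unfolding wf_dfa_def by metis
  then have "inj_on (Suc \<circ> g) (states A)" "0 \<notin> (Suc \<circ> g) ` states A"
    by (auto simp: inj_on_def)
  then show ?thesis
    using assms wf_dfa_totalize dfa_lang_totalize tcong_left_totalize
    unfolding V_language_def V_left_automaton_def by metis
qed

text \<open>A left automaton whose state after reading w is the run relation of R on rev w.\<close>

definition rev_run_dfa :: "('q, 'a) dfa \<Rightarrow> (('q \<times> 'q) set, 'a) dfa" where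
  "rev_run_dfa R = \<lparr>states = range (run_rel R), init = run_rel R [],
     trans = (\<lambda>X a. Some (run_rel R [a] O X)), final = {}\<rparr>"

context
  fixes R :: "('q, 'a) dfa"
  assumes wf: "wf_dfa R"
begin

lemma states_rev_run_dfa: "states (rev_run_dfa R) = range (run_rel R)"
  by (simp add: rev_run_dfa_def)

lemma trans_rev_run_dfa: "trans (rev_run_dfa R) (run_rel R y) a = Some (run_rel R (a # y))"
  using run_rel_append[OF wf, of "[a]" y] by (simp add: rev_run_dfa_def)

lemma steps_rev_run_dfa: "steps (rev_run_dfa R) (run_rel R y) w = Some (run_rel R (rev w @ y))"
proof (induction w arbitrary: y)
  case (Cons a w)
  then show ?case by (simp add: trans_rev_run_dfa)
qed simp

lemma wf_dfa_rev_run_dfa: "wf_dfa (rev_run_dfa R)"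
  unfolding wf_dfa_def states_rev_run_dfa
proof (intro conjI ballI allI impI)
  have "range (run_rel R) \<subseteq> Pow (states R \<times> states R)"
    by (auto simp: run_rel_def)
  moreover have "finite (states R)"
    using wf by (simp add: wf_dfa_def)
  ultimately show "finite (range (run_rel R))" by (simp add: finite_subset)
next
  fix X a Y assume "X \<in> range (run_rel R)" "trans (rev_run_dfa R) X a = Some Y"
  then show "Y \<in> range (run_rel R)" using trans_rev_run_dfa by force
qed (simp_all add: rev_run_dfa_def)

lemma tcong_left_rev_run_dfa: "tcong_left (rev_run_dfa R) = tcong_right R"
proof (intro ext)
  fix u v
  have "tcong_left (rev_run_dfa R) u v \<longleftrightarrow>
      (\<forall>y. run_rel R (rev u @ y) = run_rel R (rev v @ y))"
    unfolding tcong_left_iff_steps[OF wf_dfa_rev_run_dfa] states_rev_run_dfa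
    by (simp add: steps_rev_run_dfa)
  also have "\<dots> \<longleftrightarrow> run_rel R (rev u) = run_rel R (rev v)"
  proof
    assume "\<forall>y. run_rel R (rev u @ y) = run_rel R (rev v @ y)"
    then show "run_rel R (rev u) = run_rel R (rev v)" by (drule_tac x = "[]" in spec) simp
  qed (simp add: run_rel_append[OF wf])
  finally show "tcong_left (rev_run_dfa R) u v = tcong_right R u v"
    by (simp add: tcong_right_def)
qed

end

lemma V_language_steps_rev:
  assumes wf: "wf_dfa R" and V: "V_right_automaton V R"
  shows "V_language V {w. P (steps R (init R) (rev w))}"
proof -
  define Q where "Q X = P (if X `` {init R} = {} then None else Some (the_elem (X `` {init R})))" for X
  have "Q (run_rel R (rev w)) = P (steps R (init R) (rev w))" for w
    unfolding Q_def run_rel_Image_singleton[OF wf wf_dfa_init[OF wf]]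
    by (cases "steps R (init R) (rev w)") simp_all
  moreover have "steps (rev_run_dfa R) (init (rev_run_dfa R)) w = Some (run_rel R (rev w))" for w
    using steps_rev_run_dfa[OF wf, of "[]" w] by (simp add: rev_run_dfa_def)
  ultimately have "{w. P (steps R (init R) (rev w))} =
      {w. Q (the (steps (rev_run_dfa R) (init (rev_run_dfa R)) w))}"
    by simp
  moreover have "V_left_automaton V (rev_run_dfa R)"
    using V by (simp add: V_left_automaton_def V_right_automaton_def tcong_left_rev_run_dfa[OF wf])
  ultimately show ?thesis
    using V_language_steps[OF wf_dfa_rev_run_dfa[OF wf]] by simp
qed

definition left_state :: "('l, 'r, 'a) bimachine \<Rightarrow> 'a list \<Rightarrow> 'l option" where
  "left_state B u = steps (bL B) (init (bL B)) u"

definition right_state :: "('l, 'r, 'a) bimachine \<Rightarrow> 'a list \<Rightarrow> 'r option" where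
  "right_state B w = steps (bR B) (init (bR B)) (rev w)"

text \<open>The empty word is a junk value for undefined runs.\<close>

definition step_output :: "('l, 'r, 'a) bimachine \<Rightarrow> 'l option \<times> 'r option \<Rightarrow> 'a \<Rightarrow> 'a list" where
  "step_output B x \<sigma> = (case x of (Some l, Some r) \<Rightarrow> the (bout B l \<sigma> r) | _ \<Rightarrow> [])"

definition bm_output :: "('l, 'r, 'a) bimachine \<Rightarrow> 'a list \<Rightarrow> nat \<Rightarrow> 'a list" where
  "bm_output B u i = step_output B (left_state B (take i u), right_state B (drop (Suc i) u)) (u ! i)"

lemma left_state_take_defined:
  "left_state B u \<noteq> None \<Longrightarrow> left_state B (take i u) \<noteq> None"
  unfolding left_state_def by (rule steps_append_defined[where v = "drop i u"]) simp

lemma right_state_drop_defined: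
  "right_state B w \<noteq> None \<Longrightarrow> right_state B (drop i w) \<noteq> None"
  unfolding right_state_def
  by (rule steps_append_defined[where v = "rev (take i w)"]) (simp flip: rev_append)

lemma left_state_in_states:
  assumes "wf_bimachine B" "left_state B u = Some l"
  shows "l \<in> states (bL B)"
  using assms unfolding wf_bimachine_def left_state_def by (metis steps_in_states wf_dfa_init)

lemma right_state_in_states:
  assumes "wf_bimachine B" "right_state B w = Some r"
  shows "r \<in> states (bR B)"
  using assms unfolding wf_bimachine_def right_state_def by (metis steps_in_states wf_dfa_init)

lemma bout_eq_step_output:
  assumes "wf_bimachine B" "complete_bimachine B" "left_state B u = Some l" "right_state B w = Some r"
  shows "bout B l \<sigma> r = Some (step_output B (left_state B u, right_state B w) \<sigma>)"
  using assms left_state_in_states[OF assms(1,3)] right_state_in_states[OF assms(1,4)]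
  by (auto simp: complete_bimachine_def step_output_def)

lemma bm_sem_complete:
  assumes wf: "wf_bimachine B" and complete: "complete_bimachine B"
  shows "bm_sem B u = Some w \<longleftrightarrow>
    (\<exists>l r x y. left_state B u = Some l \<and> right_state B u = Some r \<and>
       blam B r = Some x \<and> brho B l = Some y \<and> w = x @ concat (map (bm_output B u) [0..<length u]) @ y)"
proof -
  define n where "n = length u"
  have lst: "lst B u i = left_state B (take i u)" for i
    by (simp add: lst_def left_state_def)
  have rst: "rst B u j = right_state B (drop (n - j) u)" for j
    by (simp add: rst_def right_state_def n_def)
  show ?thesis
  proof (cases "left_state B u \<noteq> None \<and> right_state B u \<noteq> None")
    case False
    then have "\<not> (\<forall>i\<le>n. lst B u i \<noteq> None \<and> rst B u i \<noteq> None)"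
      by (auto simp: lst rst n_def)
    then have "bm_sem B u = None"
      unfolding bm_sem_def Let_def n_def[symmetric] by (intro if_not_P) blast
    with False show ?thesis by auto
  next
    case True
    then obtain l r where l: "left_state B u = Some l" and r: "right_state B u = Some r"
      by blast
    have defined: "\<forall>i\<le>n. lst B u i \<noteq> None \<and> rst B u i \<noteq> None"
      unfolding lst rst
      using left_state_take_defined[of B u] right_state_drop_defined[of B u] True by simp
    have bout: "bout B (the (lst B u (i - 1))) (u ! (i - 1)) (the (rst B u (n - i))) =
        Some (bm_output B u (i - 1))" if "i \<in> {1..n}" for i
    proof -
      have "left_state B (take (i - 1) u) \<noteq> None" "right_state B (drop i u) \<noteq> None"
        using True by (simp_all add: left_state_take_defined right_state_drop_defined)
      then show ?thesis
        using that bout_eq_step_output[OF wf complete] by (auto simp: lst rst bm_output_def)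
    qed
    have "map (\<lambda>i. the (bout B (the (lst B u (i - 1))) (u ! (i - 1)) (the (rst B u (n - i)))))
        [1..<Suc n] = map (\<lambda>i. bm_output B u (i - 1)) [1..<Suc n]"
      using bout by (intro map_cong) (auto simp del: upt_Suc)
    also have "\<dots> = map (bm_output B u) [0..<n]"
      by (simp add: map_Suc_upt[symmetric] del: upt_Suc)
    finally have outputs: "map (\<lambda>i. the (bout B (the (lst B u (i - 1))) (u ! (i - 1))
        (the (rst B u (n - i))))) [1..<Suc n] = map (bm_output B u) [0..<n]" .
    have "lst B u n = Some l" "rst B u n = Some r"
      using l r by (simp_all add: lst rst n_def)
    then show ?thesis
      unfolding bm_sem_def Let_def n_def[symmetric]
      using defined bout outputs l r by (auto simp del: upt_Suc)
  qed
qed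

section \<open>The translation of a bimachine\<close>

definition run_pairs :: "('l, 'r, 'a) bimachine \<Rightarrow> ('l option \<times> 'r option) set" where
  "run_pairs B = insert None (Some ` states (bL B)) \<times> insert None (Some ` states (bR B))"

definition output_words :: "('l, 'r, 'a) bimachine \<Rightarrow> 'a list set" where
  "output_words B = {step_output B x \<sigma> | x \<sigma>. x \<in> run_pairs B}
     \<union> {x. \<exists>r\<in>states (bR B). blam B r = Some x} \<union> {y. \<exists>l\<in>states (bL B). brho B l = Some y}"

definition formula_of :: "'a mso set \<Rightarrow> 'a list set \<Rightarrow> 'a mso" where
  "formula_of F L = (SOME \<phi>. \<phi> \<in> F \<and> closed_mso \<phi> \<and> L = {w. w \<Turnstile> \<phi>})"

text \<open>Index j stands for the pair idx j of a left and a right run state.\<close>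

definition bm_translation ::
    "'a mso set \<Rightarrow> ('l, 'r, 'a) bimachine \<Rightarrow> (nat \<Rightarrow> 'l option \<times> 'r option) \<Rightarrow> 'a translation" where
  "bm_translation F B idx =
     \<lparr>tk = card (run_pairs B), tS = output_words B,
      tL = (\<lambda>j \<sigma> v. formula_of F {u. left_state B u = fst (idx j) \<and> step_output B (idx j) \<sigma> = v}),
      tR = (\<lambda>j \<sigma> v. formula_of F {w. right_state B w = snd (idx j) \<and> step_output B (idx j) \<sigma> = v}),
      tI = (\<lambda>v. formula_of F {u. \<exists>r. right_state B u = Some r \<and> blam B r = Some v}),
      tT = (\<lambda>v. formula_of F {u. \<exists>l. left_state B u = Some l \<and> brho B l = Some v})\<rparr>"

lemma formula_of:
  assumes "F_language F L"
  shows "formula_of F L \<in> F" "closed_mso (formula_of F L)" "w \<Turnstile> formula_of F L \<longleftrightarrow> w \<in> L"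
proof -
  have "\<exists>\<phi>. \<phi> \<in> F \<and> closed_mso \<phi> \<and> L = {w. w \<Turnstile> \<phi>}"
    using assms by (auto simp: F_language_def)
  then have "formula_of F L \<in> F \<and> closed_mso (formula_of F L) \<and> L = {w. w \<Turnstile> formula_of F L}"
    unfolding formula_of_def by (rule someI_ex)
  then show "formula_of F L \<in> F" "closed_mso (formula_of F L)" "w \<Turnstile> formula_of F L \<longleftrightarrow> w \<in> L"
    by auto
qed

lemma models_Conj: "w \<Turnstile> Conj \<phi> \<psi> \<longleftrightarrow> w \<Turnstile> \<phi> \<and> w \<Turnstile> \<psi>"
  by (simp add: models_def)

lemma finite_run_pairs: "wf_bimachine B \<Longrightarrow> finite (run_pairs B)"
  by (simp add: run_pairs_def wf_bimachine_def wf_dfa_def)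

lemma run_pairs_left_right_state:
  "wf_bimachine B \<Longrightarrow> (left_state B u, right_state B w) \<in> run_pairs B"
  using left_state_in_states[of B u] right_state_in_states[of B w]
  by (cases "left_state B u"; cases "right_state B w") (auto simp: run_pairs_def)

lemma finite_output_words:
  fixes B :: "('l, 'r, 'a::finite) bimachine"
  assumes "wf_bimachine B"
  shows "finite (output_words B)"
proof -
  have "finite (states (bL B))" "finite (states (bR B))"
    using assms by (simp_all add: wf_bimachine_def wf_dfa_def)
  moreover have "{step_output B x \<sigma> | x \<sigma>. x \<in> run_pairs B} =
      (\<lambda>(x, \<sigma>). step_output B x \<sigma>) ` (run_pairs B \<times> UNIV)"
    by auto
  moreover have "{x. \<exists>r\<in>states (bR B). blam B r = Some x} \<subseteq> the ` blam B ` states (bR B)"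
    by force
  moreover have "{y. \<exists>l\<in>states (bL B). brho B l = Some y} \<subseteq> the ` brho B ` states (bL B)"
    by force
  ultimately show ?thesis
    using finite_run_pairs[OF assms] unfolding output_words_def
    by (simp add: finite_subset)
qed

lemma list_eq_Cons_map_snoc:
  assumes "length ws = n + 2" and "\<And>i. i < n \<Longrightarrow> ws ! Suc i = f i"
  shows "ws = ws ! 0 # map f [0..<n] @ [ws ! Suc n]"
proof (rule nth_equalityI)
  fix i assume "i < length ws"
  with assms(1) consider "i = 0" | "0 < i" "i \<le> n" | "i = Suc n"
    by linarith
  then show "ws ! i = (ws ! 0 # map f [0..<n] @ [ws ! Suc n]) ! i"
    by cases (auto simp: nth_append assms(2)[symmetric])
qed (use assms in simp)

context
  fixes F :: "'a::finite mso set" and V :: "nat monoid set"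
    and B :: "('l, 'r, 'a) bimachine" and idx :: "nat \<Rightarrow> 'l option \<times> 'r option"
  assumes corr: "corresponds F V" and wf: "wf_bimachine B" and V_B: "V_bimachine V B"
    and idx: "bij_betw idx {1..card (run_pairs B)} (run_pairs B)"
begin

lemma F_language_left_state: "F_language F {u. P (left_state B u)}"
proof -
  have "V_language V {u. P (steps (bL B) (init (bL B)) u)}"
    using wf V_B by (intro V_language_steps) (simp_all add: wf_bimachine_def V_bimachine_def)
  then show ?thesis using corr by (simp add: corresponds_def left_state_def)
qed

lemma F_language_right_state: "F_language F {w. P (right_state B w)}"
proof -
  have "V_language V {w. P (steps (bR B) (init (bR B)) (rev w))}"
    using wf V_B by (intro V_language_steps_rev) (simp_all add: wf_bimachine_def V_bimachine_def)
  then show ?thesis using corr by (simp add: corresponds_def right_state_def)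
qed

lemma
  shows F_language_tL_language: "F_language F {u. left_state B u = fst (idx j) \<and> step_output B (idx j) \<sigma> = v}"
    and F_language_tR_language: "F_language F {w. right_state B w = snd (idx j) \<and> step_output B (idx j) \<sigma> = v}"
    and F_language_tI_language: "F_language F {u. \<exists>r. right_state B u = Some r \<and> blam B r = Some v}"
    and F_language_tT_language: "F_language F {u. \<exists>l. left_state B u = Some l \<and> brho B l = Some v}"
  using F_language_left_state[where P = "\<lambda>x. x = fst (idx j) \<and> step_output B (idx j) \<sigma> = v"]
    F_language_right_state[where P = "\<lambda>x. x = snd (idx j) \<and> step_output B (idx j) \<sigma> = v"]
    F_language_right_state[where P = "\<lambda>x. \<exists>r. x = Some r \<and> blam B r = Some v"]
    F_language_left_state[where P = "\<lambda>x. \<exists>l. x = Some l \<and> brho B l = Some v"]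
  by simp_all

lemma bm_translation_formulas:
  "tL (bm_translation F B idx) j \<sigma> v \<in> F \<and> closed_mso (tL (bm_translation F B idx) j \<sigma> v)"
  "tR (bm_translation F B idx) j \<sigma> v \<in> F \<and> closed_mso (tR (bm_translation F B idx) j \<sigma> v)"
  "tI (bm_translation F B idx) v \<in> F \<and> closed_mso (tI (bm_translation F B idx) v)"
  "tT (bm_translation F B idx) v \<in> F \<and> closed_mso (tT (bm_translation F B idx) v)"
  using formula_of(1,2)[OF F_language_tL_language] formula_of(1,2)[OF F_language_tR_language]
    formula_of(1,2)[OF F_language_tI_language] formula_of(1,2)[OF F_language_tT_language]
  by (simp_all add: bm_translation_def)

lemma bm_translation_models:
  "u \<Turnstile> tL (bm_translation F B idx) j \<sigma> v \<longleftrightarrow>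
     left_state B u = fst (idx j) \<and> step_output B (idx j) \<sigma> = v"
  "w \<Turnstile> tR (bm_translation F B idx) j \<sigma> v \<longleftrightarrow>
     right_state B w = snd (idx j) \<and> step_output B (idx j) \<sigma> = v"
  "u \<Turnstile> tI (bm_translation F B idx) v \<longleftrightarrow> (\<exists>r. right_state B u = Some r \<and> blam B r = Some v)"
  "u \<Turnstile> tT (bm_translation F B idx) v \<longleftrightarrow> (\<exists>l. left_state B u = Some l \<and> brho B l = Some v)"
  using formula_of(3)[OF F_language_tL_language] formula_of(3)[OF F_language_tR_language]
    formula_of(3)[OF F_language_tI_language] formula_of(3)[OF F_language_tT_language]
  by (simp_all add: bm_translation_def)

lemma tk_bm_translation: "tk (bm_translation F B idx) = card (run_pairs B)"
  and tS_bm_translation: "tS (bm_translation F B idx) = output_words B"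
  by (simp_all add: bm_translation_def)

lemma bm_translation_position:
  "(\<exists>j\<in>{1..tk (bm_translation F B idx)}.
      u \<Turnstile> tL (bm_translation F B idx) j \<sigma> v \<and> w \<Turnstile> tR (bm_translation F B idx) j \<sigma> v)
   \<longleftrightarrow> v = step_output B (left_state B u, right_state B w) \<sigma>"
proof -
  have pair: "left_state B u = fst (idx j) \<and> right_state B w = snd (idx j) \<longleftrightarrow>
      idx j = (left_state B u, right_state B w)" for j
    by (cases "idx j") auto
  have "(left_state B u, right_state B w) \<in> idx ` {1..card (run_pairs B)}"
    using idx run_pairs_left_right_state[OF wf] by (simp add: bij_betw_def)
  then show ?thesis
    unfolding bm_translation_models tk_bm_translation using pair by force
qed

lemma F_translation_bm_translation: "F_translation F (bm_translation F B idx)"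
  unfolding F_translation_def
proof (intro conjI ballI allI impI)
  have "(None, None) \<in> run_pairs B" by (simp add: run_pairs_def)
  then show "0 < tk (bm_translation F B idx)"
    using finite_run_pairs[OF wf] by (auto simp: tk_bm_translation card_gt_0_iff)
  show "finite (tS (bm_translation F B idx))"
    using finite_output_words[OF wf] by (simp add: tS_bm_translation)
next
  fix \<sigma> u w
  have "step_output B (left_state B u, right_state B w) \<sigma> \<in> tS (bm_translation F B idx)"
    using run_pairs_left_right_state[OF wf] unfolding tS_bm_translation output_words_def by blast
  then show "\<exists>j\<in>{1..tk (bm_translation F B idx)}. \<exists>v\<in>tS (bm_translation F B idx).
      u \<Turnstile> tL (bm_translation F B idx) j \<sigma> v \<and> w \<Turnstile> tR (bm_translation F B idx) j \<sigma> v"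
    using bm_translation_position by blast
next
  fix v1 v2 :: "'a list" and j j' \<sigma> assume "v1 \<noteq> v2"
  show "unsat (Conj (tL (bm_translation F B idx) j \<sigma> v1) (tL (bm_translation F B idx) j' \<sigma> v2)) \<or>
      unsat (Conj (tR (bm_translation F B idx) j \<sigma> v1) (tR (bm_translation F B idx) j' \<sigma> v2))"
  proof (rule ccontr)
    assume "\<not> ?thesis"
    then obtain u w where
      "u \<Turnstile> tL (bm_translation F B idx) j \<sigma> v1" "u \<Turnstile> tL (bm_translation F B idx) j' \<sigma> v2"
      "w \<Turnstile> tR (bm_translation F B idx) j \<sigma> v1" "w \<Turnstile> tR (bm_translation F B idx) j' \<sigma> v2"
      by (auto simp: unsat_def models_Conj)
    then have "idx j = idx j'" "v1 = step_output B (idx j) \<sigma>" "v2 = step_output B (idx j') \<sigma>"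
      by (simp_all add: bm_translation_models prod_eq_iff)
    with \<open>v1 \<noteq> v2\<close> show False by simp
  qed
next
  fix v1 v2 :: "'a list" assume "v1 \<noteq> v2"
  then show "unsat (Conj (tI (bm_translation F B idx) v1) (tI (bm_translation F B idx) v2))"
    "unsat (Conj (tT (bm_translation F B idx) v1) (tT (bm_translation F B idx) v2))"
    by (auto simp: unsat_def models_Conj bm_translation_models)
qed (simp_all add: bm_translation_formulas)

lemma bm_sem_of_trans_rel:
  assumes complete: "complete_bimachine B" and "(u, w) \<in> trans_rel (bm_translation F B idx)"
  shows "bm_sem B u = Some w"
proof -
  let ?T = "bm_translation F B idx"
  obtain ws where len: "length ws = length u + 2" and w: "w = concat ws"
    and mid: "\<forall>i\<in>{1..length u}. \<exists>j\<in>{1..tk ?T}.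
      take (i - 1) u \<Turnstile> tL ?T j (u ! (i - 1)) (ws ! i) \<and> drop i u \<Turnstile> tR ?T j (u ! (i - 1)) (ws ! i)"
    and ini: "u \<Turnstile> tI ?T (ws ! 0)" and fin: "u \<Turnstile> tT ?T (ws ! (length u + 1))"
    using assms(2) unfolding trans_rel_def by blast
  have "ws ! Suc i = bm_output B u i" if "i < length u" for i
    using mid[rule_format, of "Suc i"] that unfolding bm_translation_position by (simp add: bm_output_def)
  then have "ws = ws ! 0 # map (bm_output B u) [0..<length u] @ [ws ! Suc (length u)]"
    by (rule list_eq_Cons_map_snoc[OF len])
  then have "concat ws = concat (ws ! 0 # map (bm_output B u) [0..<length u] @ [ws ! Suc (length u)])"
    by (rule arg_cong)
  then have "w = ws ! 0 @ concat (map (bm_output B u) [0..<length u]) @ ws ! Suc (length u)"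
    using w by simp
  with ini fin show ?thesis
    unfolding bm_sem_complete[OF wf complete] bm_translation_models by auto
qed

lemma trans_rel_of_bm_sem:
  assumes complete: "complete_bimachine B" and "bm_sem B u = Some w"
  shows "(u, w) \<in> trans_rel (bm_translation F B idx)"
proof -
  let ?T = "bm_translation F B idx"
  obtain l r x y where l: "left_state B u = Some l" and r: "right_state B u = Some r"
    and x: "blam B r = Some x" and y: "brho B l = Some y"
    and w: "w = x @ concat (map (bm_output B u) [0..<length u]) @ y"
    using assms(2) unfolding bm_sem_complete[OF wf complete] by blast
  define ws where "ws = x # map (bm_output B u) [0..<length u] @ [y]"
  have "x \<in> output_words B" using right_state_in_states[OF wf r] x by (auto simp: output_words_def)
  moreover have "y \<in> output_words B" using left_state_in_states[OF wf l] y by (auto simp: output_words_def)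
  moreover have "bm_output B u i \<in> output_words B" for i
    using run_pairs_left_right_state[OF wf] unfolding output_words_def bm_output_def by blast
  ultimately have ws_words: "set ws \<subseteq> tS ?T" by (auto simp: ws_def tS_bm_translation)
  have ws_mid: "ws ! i = bm_output B u (i - 1)" if "i \<in> {1..length u}" for i
    using that by (auto simp: ws_def nth_append)
  show ?thesis
    unfolding trans_rel_def
  proof (intro CollectI case_prodI exI[of _ ws] conjI ballI)
    fix i assume "i \<in> {1..length u}"
    then show "\<exists>j\<in>{1..tk ?T}.
        take (i - 1) u \<Turnstile> tL ?T j (u ! (i - 1)) (ws ! i) \<and> drop i u \<Turnstile> tR ?T j (u ! (i - 1)) (ws ! i)"
      unfolding bm_translation_position using ws_mid by (simp add: bm_output_def)
  qed (use ws_words l r x y in \<open>auto simp: ws_def w bm_translation_models nth_append\<close>)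
qed

lemma trans_rel_bm_translation:
  assumes "complete_bimachine B"
  shows "trans_rel (bm_translation F B idx) = {(u, w). bm_sem B u = Some w}"
proof (rule Set.set_eqI) \<comment> \<open>HOL-Algebra shadows \<open>set_eqI\<close>.\<close>
  fix p :: "'a list \<times> 'a list"
  show "p \<in> trans_rel (bm_translation F B idx) \<longleftrightarrow> p \<in> {(u, w). bm_sem B u = Some w}"
    using bm_sem_of_trans_rel[OF assms] trans_rel_of_bm_sem[OF assms] by (cases p) blast
qed

end

theorem mainTheorem3:
  fixes V :: "nat monoid set"
    and F :: "('a::finite) mso set"
    and B :: "('l, 'r, 'a) bimachine"
    and f :: "'a list \<Rightarrow> 'a list option"
  assumes "monoid_variety V"
    and "corresponds F V"
    and "wf_bimachine B" and "complete_bimachine B" and "V_bimachine V B"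
    and "f = bm_sem B"
  shows "definable_by_translation F f"
proof -
  obtain idx where idx: "bij_betw idx {1..card (run_pairs B)} (run_pairs B)"
    using ex_bij_betw_nat_finite_1[OF finite_run_pairs[OF assms(3)]] by blast
  have "F_translation F (bm_translation F B idx)"
    by (rule F_translation_bm_translation[OF assms(2,3,5) idx])
  moreover have "{(u, w). f u = Some w} = trans_rel (bm_translation F B idx)"
    using trans_rel_bm_translation[OF assms(2,3,5) idx assms(4)] assms(6) by simp
  ultimately show ?thesis
    unfolding definable_by_translation_def by blast
qed

end
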